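(* If a subshift $X$ has infinitely many significant blocks, then for every $n\in\mathbb N$, $n\ge1$, there exists a significant block of $X$ of length $n$.
   Context: Let $\mathcal A$ be a finite alphabet and $\sigma$ the shift, $(\sigma x)_i=x_{i+1}$. For a one-sided subshift $X^+\subseteq\mathcal A^{\mathbb N}$ (nonempty, closed, $\sigma$-invariant), the natural extension is $\tilde X=\{x\in\mathcal A^{\mathbb Z}: x_px_{p+1}\dots\in X^+\ \forall p\in\mathbb Z\}$; for a two-sided subshift $X$, $X^+$ is the set of right rays of its points and $\tilde X=X$. For a block $a_{-n}\dots a_0$ occurring in $\tilde X$, $\mathrm{fol}(a_{-n}\dots a_0)=\{b_0b_1\dots\in X^+:\exists b\in\tilde X,\ b_{-n}\dots b_0=a_{-n}\dots a_0\}$. A block $a_{-n}\dots a_0$ occurring in $\tilde X$ with $n\ge1$ is a significant block of $X$ if $\mathrm{fol}(a_{-n}\dots a_0)\subsetneq\mathrm{fol}(a_{-n+1}\dots a_0)$; single symbols occurring in $\tilde X$ are also counted as significant. *)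

theory Defs
  imports Main
begin

definition shift1 :: "(nat \<Rightarrow> 'a) \<Rightarrow> (nat \<Rightarrow> 'a)" where
  "shift1 x = (\<lambda>i. x (Suc i))"

text \<open>Closedness in the product topology of the discrete alphabet:
x belongs to X whenever every finite prefix of x is a prefix of some point of X.\<close>
definition closed_seqset :: "(nat \<Rightarrow> 'a) set \<Rightarrow> bool" where
  "closed_seqset X \<longleftrightarrow>
     (\<forall>x. (\<forall>N. \<exists>y\<in>X. \<forall>i<N. y i = x i) \<longrightarrow> x \<in> X)"

definition one_sided_subshift :: "(nat \<Rightarrow> 'a::finite) set \<Rightarrow> bool" where
  "one_sided_subshift X \<longleftrightarrow> X \<noteq> {} \<and> closed_seqset X \<and> shift1 ` X \<subseteq> X"

definition nat_ext :: "(nat \<Rightarrow> 'a) set \<Rightarrow> (int \<Rightarrow> 'a) set" where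
  "nat_ext Xp = {x. \<forall>p::int. (\<lambda>i::nat. x (p + int i)) \<in> Xp}"

definition occurs_in :: "(int \<Rightarrow> 'a) set \<Rightarrow> 'a list \<Rightarrow> bool" where
  "occurs_in Xt w \<longleftrightarrow> (\<exists>b\<in>Xt. \<exists>p::int. \<forall>i<length w. b (p + int i) = w ! i)"

text \<open>The follower set of a block a_{-n}..a_0 (the list [a_{-n},...,a_0]):
right rays b_0 b_1 ... of points b of the natural extension with
b_{-n}..b_0 = a_{-n}..a_0.\<close>
definition fol :: "(int \<Rightarrow> 'a) set \<Rightarrow> 'a list \<Rightarrow> (nat \<Rightarrow> 'a) set" where
  "fol Xt w = {(\<lambda>i::nat. b (int i)) | b. b \<in> Xt \<and>
      (\<forall>i<length w. b (int i - int (length w) + 1) = w ! i)}"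

definition significant_blocks :: "(nat \<Rightarrow> 'a) set \<Rightarrow> 'a list set" where
  "significant_blocks Xp =
     {w. occurs_in (nat_ext Xp) w \<and>
         (length w = 1 \<or> (length w \<ge> 2 \<and> fol (nat_ext Xp) w \<subset> fol (nat_ext Xp) (tl w)))}"

end

theory Submission
  imports Defs
begin

text \<open>If no block of length n \<ge> 2 is significant, then fol(u) = fol(tl u) for every block u of
length n. Since fol(u s) is determined by fol(u) and the last symbol of u, this equality propagates
to all longer blocks, so every significant block is shorter than n and there are only finitely
many. For n = 1, the first symbol of any significant block is itself a significant block.\<close>

definition ends_with :: "(int \<Rightarrow> 'a) \<Rightarrow> 'a list \<Rightarrow> bool" where
  "ends_with b w \<longleftrightarrow> (\<forall>i<length w. b (int i - int (length w) + 1) = w ! i)"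

lemma fol_conv_ends_with: "fol Xt w = {(\<lambda>i::nat. b (int i)) | b. b \<in> Xt \<and> ends_with b w}"
  by (simp add: fol_def ends_with_def)

lemma ends_with_tl:
  assumes "ends_with b w"
  shows "ends_with b (tl w)"
  unfolding ends_with_def
proof (intro allI impI)
  fix i assume "i < length (tl w)"
  then show "b (int i - int (length (tl w)) + 1) = tl w ! i"
    using assms[unfolded ends_with_def, rule_format, of "Suc i"] by (simp add: nth_tl)
qed

lemma ends_with_last:
  assumes "ends_with b w" "w \<noteq> []"
  shows "b 0 = last w"
  using assms(1)[unfolded ends_with_def, rule_format, of "length w - 1"] assms(2)
  by (cases "length w") (simp_all add: last_conv_nth)

lemma ends_with_snoc: "ends_with b (u @ [s]) \<longleftrightarrow> b 0 = s \<and> ends_with (\<lambda>j. b (j - 1)) u"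
  by (auto simp: ends_with_def nth_append less_Suc_eq algebra_simps)

lemma fol_tl_subset: "fol Xt w \<subseteq> fol Xt (tl w)"
  by (auto simp: fol_conv_ends_with intro: ends_with_tl)

lemma occurs_in_take:
  assumes "occurs_in Xt w"
  shows "occurs_in Xt (take k w)"
proof -
  obtain b p where "b \<in> Xt" "\<forall>i<length w. b (p + int i) = w ! i"
    using assms unfolding occurs_in_def by blast
  then show ?thesis
    unfolding occurs_in_def by (intro bexI[of _ b] exI[of _ p]) auto
qed

lemma nat_ext_translate:
  assumes "b \<in> nat_ext Xp"
  shows "(\<lambda>j. b (j + k)) \<in> nat_ext Xp"
proof -
  have "(\<lambda>i::nat. b (p + k + int i)) \<in> Xp" for p
    using assms unfolding nat_ext_def by blast
  then show ?thesis
    unfolding nat_ext_def by (simp add: algebra_simps)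
qed

text \<open>Translating a point of the natural extension by one position turns a follower of u s into a
follower of u, with last u prepended, and back.\<close>

lemma fol_snoc:
  assumes "u \<noteq> []"
  shows "r \<in> fol (nat_ext Xp) (u @ [s]) \<longleftrightarrow>
    r 0 = s \<and> case_nat (last u) r \<in> fol (nat_ext Xp) u"
proof
  assume "r \<in> fol (nat_ext Xp) (u @ [s])"
  then obtain b where r: "r = (\<lambda>i. b (int i))" and b: "b \<in> nat_ext Xp"
    and ends: "ends_with b (u @ [s])"
    by (auto simp: fol_conv_ends_with)
  define b' where "b' = (\<lambda>j. b (j - 1))"
  have b': "b' \<in> nat_ext Xp" and ends': "ends_with b' u"
    using nat_ext_translate[OF b, of "-1"] ends by (simp_all add: b'_def ends_with_snoc)
  have "case_nat (last u) r = (\<lambda>i. b' (int i))"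
    using ends_with_last[OF ends' assms] by (auto simp: r b'_def split: nat.split)
  with b' ends' ends show "r 0 = s \<and> case_nat (last u) r \<in> fol (nat_ext Xp) u"
    by (auto simp: fol_conv_ends_with r ends_with_snoc)
next
  assume "r 0 = s \<and> case_nat (last u) r \<in> fol (nat_ext Xp) u"
  then obtain b' where r0: "r 0 = s" and r: "case_nat (last u) r = (\<lambda>i. b' (int i))"
    and b': "b' \<in> nat_ext Xp" and ends': "ends_with b' u"
    by (auto simp: fol_conv_ends_with)
  define b where "b = (\<lambda>j. b' (j + 1))"
  have ray: "r = (\<lambda>i. b (int i))"
  proof
    fix i show "r i = b (int i)"
      using fun_cong[OF r, of "Suc i"] by (simp add: b_def add.commute)
  qed
  have "ends_with b (u @ [s])"
    using ends' r0 by (simp add: ends_with_snoc b_def ray)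
  with nat_ext_translate[OF b', of 1] show "r \<in> fol (nat_ext Xp) (u @ [s])"
    by (auto simp: fol_conv_ends_with ray b_def)
qed

lemma fol_snoc_cong:
  assumes "u \<noteq> []" "v \<noteq> []" "last u = last v" "fol (nat_ext Xp) u = fol (nat_ext Xp) v"
  shows "fol (nat_ext Xp) (u @ [s]) = fol (nat_ext Xp) (v @ [s])"
  using assms by (auto simp: fol_snoc)

lemma fol_eq_fol_tl_propagates:
  assumes "n \<ge> 2"
    and fol_eq: "\<And>u. length u = n \<Longrightarrow> occurs_in (nat_ext Xp) u \<Longrightarrow>
                   fol (nat_ext Xp) u = fol (nat_ext Xp) (tl u)"
    and "length w \<ge> n" "occurs_in (nat_ext Xp) w"
  shows "fol (nat_ext Xp) w = fol (nat_ext Xp) (tl w)"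
  using assms(3,4)
proof (induction "length w - n" arbitrary: w)
  case 0
  then show ?case by (simp add: fol_eq)
next
  case (Suc k)
  define u where "u = butlast w"
  have "w \<noteq> []"
    using Suc.hyps(2) by auto
  then have w: "w = u @ [last w]" and "length u \<ge> n"
    using Suc.hyps(2) by (auto simp: u_def)
  then have nonempty: "u \<noteq> []" "tl u \<noteq> []"
    using \<open>n \<ge> 2\<close> by (auto simp flip: length_greater_0_conv)
  have "fol (nat_ext Xp) u = fol (nat_ext Xp) (tl u)"
    using Suc.hyps(1)[of u] \<open>length u \<ge> n\<close> Suc.hyps(2) occurs_in_take[OF Suc.prems(2)]
    by (simp add: u_def butlast_conv_take)
  with nonempty have "fol (nat_ext Xp) (u @ [last w]) = fol (nat_ext Xp) (tl u @ [last w])"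
    by (intro fol_snoc_cong) (simp_all add: last_tl)
  with w nonempty show ?case
    by (metis tl_append2)
qed

lemma significant_blocks_shorter:
  assumes "n \<ge> 2" and none: "\<not> (\<exists>w\<in>significant_blocks Xp. length w = n)"
  shows "significant_blocks Xp \<subseteq> {w. length w < n}"
proof
  fix w assume w: "w \<in> significant_blocks Xp"
  have fol_eq: "fol (nat_ext Xp) u = fol (nat_ext Xp) (tl u)"
    if "length u = n" "occurs_in (nat_ext Xp) u" for u
  proof -
    have "\<not> fol (nat_ext Xp) u \<subset> fol (nat_ext Xp) (tl u)"
      using none that \<open>n \<ge> 2\<close> unfolding significant_blocks_def by auto
    then show ?thesis
      using fol_tl_subset[of "nat_ext Xp" u] by blast
  qed
  show "w \<in> {w. length w < n}"
  proof (rule ccontr)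
    assume "w \<notin> {w. length w < n}"
    then have "length w \<ge> n"
      by simp
    moreover have "occurs_in (nat_ext Xp) w"
      using w by (simp add: significant_blocks_def)
    ultimately have "fol (nat_ext Xp) w = fol (nat_ext Xp) (tl w)"
      using fol_eq_fol_tl_propagates[OF \<open>n \<ge> 2\<close>] fol_eq by blast
    with w \<open>length w \<ge> n\<close> \<open>n \<ge> 2\<close> show False
      by (simp add: significant_blocks_def)
  qed
qed

theorem proposition3p10:
  fixes Xp :: "(nat \<Rightarrow> 'a::finite) set"
  assumes "one_sided_subshift Xp"
    and "infinite (significant_blocks Xp)"
    and "(n::nat) \<ge> 1"
  shows "\<exists>w\<in>significant_blocks Xp. length w = n"
proof (cases "n = 1")
  case True
  obtain w where w: "w \<in> significant_blocks Xp"
    using assms(2) by (metis ex_in_conv finite.emptyI)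
  then have "take 1 w \<in> significant_blocks Xp" and "length (take 1 w) = 1"
    by (auto simp: significant_blocks_def occurs_in_take)
  with True show ?thesis
    by blast
next
  case False
  show ?thesis
  proof (rule ccontr)
    assume "\<not> ?thesis"
    with False assms(3) have "significant_blocks Xp \<subseteq> {w. set w \<subseteq> UNIV \<and> length w \<le> n}"
      using significant_blocks_shorter[of n Xp] by auto
    with assms(2) show False
      using finite_lists_length_le[of "UNIV :: 'a set" n] finite_subset by auto
  qed
qed

end
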